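(* Assume that $\lambda^*<+\infty$ and that there exists a simple solution $(u^*,\psi^* )\in S\times\Sigma$ of the maximin problem $\lambda^*=\sup_{u\in S}\inf_{\psi\in\Sigma}\Lambda(u,\psi)$. Then $(u^*,\lambda^* )$ is a maximal turning point of $F(u,\lambda)=0$ in $S$, and $\operatorname{Ker}(D_uF^T(u^*,\lambda^* ))=\operatorname{span}\{\psi^*\}$.
   Context: Let $T,G:\mathbb{R}^n\to\mathbb{R}^n$ be continuously differentiable and $F(u,\lambda)=T(u)-\lambda G(u)$ for $(u,\lambda)\in\mathbb{R}^n\times\mathbb{R}$; $D_uF(u,\lambda)$ is the Jacobian of $F$ with respect to $u$ and $D_uF^T(u,\lambda)$ its transpose. $\langle\cdot,\cdot\rangle$ is the Euclidean inner product. Let $\Sigma=\{\psi\in\mathbb{R}^n\setminus\{0\}:\psi_i\ge 0,\ i=1,\dots,n\}$. Standing assumption: $S\subset\mathbb{R}^n$ is open and $\langle G(u),\psi\rangle>0$ for all $u\in S$, $\psi\in\Sigma$. Put $\Lambda(u,\psi)=\langle T(u),\psi\rangle/\langle G(u),\psi\rangle$ for $u\in S,\psi\in\Sigma$, and $\lambda^*=\sup_{u\in S}\inf_{\psi\in\Sigma}\Lambda(u,\psi)$. A point $(u^*,\psi^* )\in S\times\Sigma$ is a stationary point of $\Lambda$ if $D_\psi\Lambda(u^*,\psi^* )=0$ and $D_u\Lambda(u^*,\psi^* )=0$; it is a solution of the maximin problem if it is a stationary point and $\Lambda(u^*,\psi^* )=\lambda^*$; it is a simple solution if moreover $\dim\operatorname{Ker}D_{u\psi}\Lambda(u^*,\psi^*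 )=1$, where $D_{u\psi}\Lambda$ is the $n\times n$ matrix of mixed second partial derivatives $\partial^2\Lambda/\partial u_j\partial\psi_i$. A point $(u^*,\lambda^* )$ is a turning point of $F=0$ if there are $a>0$ and a $C^1$ map $(-a,a)\ni s\mapsto(u(s),\lambda(s))\in\mathbb{R}^n\times\mathbb{R}$ such that (1) $F(u(s),\lambda(s))=0$ for all $s\in(-a,a)$ and $(u(0),\lambda(0))=(u^*,\lambda^* )$; (2) $\frac{d}{ds}\lambda(0)=0$; (3) either $\lambda(s)\le\lambda^*$ for all $s\in(-a,a)$ or $\lambda(s)\ge\lambda^*$ for all $s\in(-a,a)$. A turning point $(u^*,\lambda^* )$ is a maximal turning point in $S$ if $u^*\in S$ and $\lambda^*\ge\lambda_0$ for every turning point $(u_0,\lambda_0)$ with $u_0\in S$. *)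

theory Defs
  imports "HOL-Analysis.Analysis"
begin

definition C1_map :: "(real^'n \<Rightarrow> real^'n) \<Rightarrow> bool" where
  "C1_map f \<longleftrightarrow> (\<forall>x. f differentiable (at x)) \<and> continuous_on UNIV (\<lambda>x. jacobian f (at x))"

definition Fmap :: "(real^'n \<Rightarrow> real^'n) \<Rightarrow> (real^'n \<Rightarrow> real^'n) \<Rightarrow> real^'n \<Rightarrow> real \<Rightarrow> real^'n" where
  "Fmap T G u lam = T u - lam *\<^sub>R G u"

definition Sigma_cone :: "(real^'n) set" where
  "Sigma_cone = {psi. psi \<noteq> 0 \<and> (\<forall>i. 0 \<le> psi $ i)}"

definition Lam :: "(real^'n \<Rightarrow> real^'n) \<Rightarrow> (real^'n \<Rightarrow> real^'n) \<Rightarrow> real^'n \<Rightarrow> real^'n \<Rightarrow> real" where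
  "Lam T G u psi = (T u \<bullet> psi) / (G u \<bullet> psi)"

definition lambda_star :: "(real^'n \<Rightarrow> real^'n) \<Rightarrow> (real^'n \<Rightarrow> real^'n) \<Rightarrow> (real^'n) set \<Rightarrow> ereal" where
  "lambda_star T G S = (SUP u\<in>S. INF psi\<in>Sigma_cone. ereal (Lam T G u psi))"

definition stationary_point :: "(real^'n \<Rightarrow> real^'n) \<Rightarrow> (real^'n \<Rightarrow> real^'n) \<Rightarrow> (real^'n) set \<Rightarrow> real^'n \<Rightarrow> real^'n \<Rightarrow> bool" where
  "stationary_point T G S u psi \<longleftrightarrow> u \<in> S \<and> psi \<in> Sigma_cone \<and>
     ((\<lambda>p. Lam T G u p) has_derivative (\<lambda>h. 0)) (at psi) \<and>
     ((\<lambda>v. Lam T G v psi) has_derivative (\<lambda>h. 0)) (at u)"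

definition maximin_solution :: "(real^'n \<Rightarrow> real^'n) \<Rightarrow> (real^'n \<Rightarrow> real^'n) \<Rightarrow> (real^'n) set \<Rightarrow> real^'n \<Rightarrow> real^'n \<Rightarrow> bool" where
  "maximin_solution T G S u psi \<longleftrightarrow> stationary_point T G S u psi \<and> ereal (Lam T G u psi) = lambda_star T G S"

definition pderiv_at :: "(real^'n \<Rightarrow> real) \<Rightarrow> real^'n \<Rightarrow> 'n \<Rightarrow> real" where
  "pderiv_at f x j = deriv (\<lambda>t. f (x + t *\<^sub>R axis j 1)) 0"

text \<open>Matrix of mixed second partial derivatives, entry (i,j) = d^2 Lambda / du_j dpsi_i.\<close>
definition D_upsi_Lam :: "(real^'n \<Rightarrow> real^'n) \<Rightarrow> (real^'n \<Rightarrow> real^'n) \<Rightarrow> real^'n \<Rightarrow> real^'n \<Rightarrow> real^'n^'n" where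
  "D_upsi_Lam T G u psi = (\<chi> i j. pderiv_at (\<lambda>v. pderiv_at (\<lambda>p. Lam T G v p) psi i) u j)"

definition simple_solution :: "(real^'n \<Rightarrow> real^'n) \<Rightarrow> (real^'n \<Rightarrow> real^'n) \<Rightarrow> (real^'n) set \<Rightarrow> real^'n \<Rightarrow> real^'n \<Rightarrow> bool" where
  "simple_solution T G S u psi \<longleftrightarrow> maximin_solution T G S u psi \<and>
     dim {x. D_upsi_Lam T G u psi *v x = 0} = 1"

definition turning_point :: "(real^'n \<Rightarrow> real^'n) \<Rightarrow> (real^'n \<Rightarrow> real^'n) \<Rightarrow> real^'n \<Rightarrow> real \<Rightarrow> bool" where
  "turning_point T G u0 lam0 \<longleftrightarrow>
     (\<exists>a>0. \<exists>us :: real \<Rightarrow> real^'n. \<exists>ls :: real \<Rightarrow> real.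
        (\<lambda>s. (us s, ls s)) C1_differentiable_on {-a<..<a} \<and>
        (\<forall>s\<in>{-a<..<a}. Fmap T G (us s) (ls s) = 0) \<and> us 0 = u0 \<and> ls 0 = lam0 \<and>
        (ls has_real_derivative 0) (at 0) \<and>
        ((\<forall>s\<in>{-a<..<a}. ls s \<le> lam0) \<or> (\<forall>s\<in>{-a<..<a}. ls s \<ge> lam0)))"

definition maximal_turning_point :: "(real^'n \<Rightarrow> real^'n) \<Rightarrow> (real^'n \<Rightarrow> real^'n) \<Rightarrow> (real^'n) set \<Rightarrow> real^'n \<Rightarrow> real \<Rightarrow> bool" where
  "maximal_turning_point T G S u lam \<longleftrightarrow> turning_point T G u lam \<and> u \<in> S \<and>
     (\<forall>u0 lam0. turning_point T G u0 lam0 \<and> u0 \<in> S \<longrightarrow> lam0 \<le> lam)"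

end

theory Submission
  imports Defs
begin

text \<open>Stationarity of \<open>\<Lambda>\<close> in \<open>\<psi>\<close> at \<open>(u\<^sup>*, \<psi>\<^sup>*)\<close> gives \<open>T u\<^sup>* = \<lambda>\<^sup>* G u\<^sup>*\<close>, and
  stationarity in \<open>u\<close> gives \<open>J\<^sup>T \<psi>\<^sup>* = 0\<close> for \<open>J = D\<^sub>uF(u\<^sup>*, \<lambda>\<^sup>*)\<close>. At such a point the
  mixed Hessian \<open>D\<^sub>u\<^sub>\<psi>\<Lambda>\<close> equals \<open>J / \<langle>G u\<^sup>*, \<psi>\<^sup>*\<rangle>\<close>, so simplicity says that \<open>Ker J\<close> is a
  line, and by rank-nullity so is \<open>Ker J\<^sup>T = span {\<psi>\<^sup>*}\<close>. As \<open>\<langle>G u\<^sup>*, \<psi>\<^sup>*\<rangle> > 0\<close>, bordering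
  \<open>J\<close> by a generator \<open>\<phi>\<close> of \<open>Ker J\<close> gives an invertible derivative of
  \<open>(u, \<lambda>) \<mapsto> (F(u, \<lambda>), \<langle>\<phi>, u\<rangle>)\<close>, and the inverse function theorem yields a \<open>C\<^sup>1\<close> curve of
  zeros of \<open>F\<close> through \<open>(u\<^sup>*, \<lambda>\<^sup>*)\<close> with \<open>\<lambda>'(0) = 0\<close>. Finally, if \<open>F(v, \<lambda>) = 0\<close> with
  \<open>v \<in> S\<close> then \<open>\<Lambda>(v, \<cdot>) \<equiv> \<lambda>\<close>, hence \<open>\<lambda> \<le> \<lambda>\<^sup>*\<close>: this is both the one-sided condition on the
  curve and the maximality of the turning point.\<close>

section \<open>Null spaces of matrices\<close>

lemma transpose_mult_vec_eq_0_iff: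
  fixes A :: "real^'n^'m"
  shows "transpose A *v w = 0 \<longleftrightarrow> (\<forall>x. (A *v x) \<bullet> w = 0)"
proof
  assume "\<forall>x. (A *v x) \<bullet> w = 0"
  then have "(A *v (transpose A *v w)) \<bullet> w = 0" by blast
  then show "transpose A *v w = 0"
    by (simp add: inner_commute dot_lmul_matrix[symmetric])
qed (simp add: inner_commute dot_lmul_matrix[symmetric])

lemma dim_null_space_add_rank:
  fixes A :: "real^'n^'m"
  shows "dim {x. A *v x = 0} + rank A = CARD('n)"
proof -
  let ?R = "range (\<lambda>w. transpose A *v w)"
  have null: "{x. A *v x = 0} = {x \<in> UNIV. \<forall>z\<in>?R. orthogonal z x}"
    using transpose_mult_vec_eq_0_iff[of "transpose A"]
    by (auto simp: orthogonal_def inner_commute dot_lmul_matrix[symmetric])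
  have "dim {x \<in> UNIV. \<forall>z\<in>?R. orthogonal z x} + dim ?R = dim (UNIV :: (real^'n) set)"
    by (rule dim_subspace_orthogonal_to_vectors[OF
          linear_subspace_image[OF matrix_vector_mul_linear subspace_UNIV] subspace_UNIV subset_UNIV])
  moreover have "dim ?R = rank A"
    using rank_dim_range[of "transpose A"] by (simp add: rank_transpose)
  ultimately show ?thesis
    unfolding null by simp
qed

lemma subspace_null_space: "subspace {x. (A :: real^'n^'m) *v x = 0}"
  by (rule linear_subspace_kernel[OF matrix_vector_mul_linear, simplified])

lemma subspace_eq_span_of_dim_1:
  fixes K :: "'a::euclidean_space set"
  assumes "subspace K" "dim K = 1" "x \<in> K" "x \<noteq> 0"
  shows "K = span {x}"
proof -
  have "span {x} = span K"
    by (rule dim_eq_span) (use assms in simp_all)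
  with \<open>subspace K\<close> show ?thesis by (metis span_eq_iff)
qed

lemma null_space_transpose_eq_span:
  fixes A :: "real^'n^'n"
  assumes "dim {x. A *v x = 0} = 1" "transpose A *v w = 0" "w \<noteq> 0"
  shows "{x. transpose A *v x = 0} = span {w}"
proof (rule subspace_eq_span_of_dim_1)
  show "subspace {x. transpose A *v x = 0}"
    by (rule subspace_null_space)
  show "dim {x. transpose A *v x = 0} = 1"
    using dim_null_space_add_rank[of A] dim_null_space_add_rank[of "transpose A"] assms(1)
    by (simp add: rank_transpose)
qed (use assms in simp_all)

section \<open>Critical points of quotients\<close>

lemma critical_point_of_quotient:
  fixes f g :: "'a::real_normed_vector \<Rightarrow> real"
  assumes "((\<lambda>x. f x / g x) has_derivative (\<lambda>h. 0)) (at x)"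
    and "(f has_derivative f') (at x)" "(g has_derivative g') (at x)" "g x \<noteq> 0"
  shows "f' h = f x / g x * g' h"
proof -
  have "(\<lambda>h. (f' h * g x - f x * g' h) / (g x * g x)) = (\<lambda>h. 0)"
    using has_derivative_unique[OF has_derivative_divide'[OF assms(2-4)] assms(1)] .
  then have "(f' h * g x - f x * g' h) / (g x * g x) = 0" by meson
  with \<open>g x \<noteq> 0\<close> show ?thesis by (simp add: field_simps)
qed

lemma inner_quotient_critical_point:
  fixes a b p :: "'a::real_inner"
  assumes "((\<lambda>q. (a \<bullet> q) / (b \<bullet> q)) has_derivative (\<lambda>h. 0)) (at p)" "b \<bullet> p \<noteq> 0"
  shows "a = ((a \<bullet> p) / (b \<bullet> p)) *\<^sub>R b"
proof -
  let ?d = "a - ((a \<bullet> p) / (b \<bullet> p)) *\<^sub>R b"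
  have eq: "a \<bullet> h = (a \<bullet> p) / (b \<bullet> p) * (b \<bullet> h)" for h
    using critical_point_of_quotient[OF assms(1) has_derivative_inner_right[OF has_derivative_ident]
        has_derivative_inner_right[OF has_derivative_ident] assms(2)] .
  have "?d \<bullet> h = 0" for h
    using eq[of h] by (simp add: inner_diff_left)
  from this[of ?d] show ?thesis by simp
qed

section \<open>Derivatives of \<open>F\<close> and \<open>\<Lambda>\<close>\<close>

lemma C1_map_has_derivative:
  "C1_map f \<Longrightarrow> (f has_derivative (\<lambda>h. jacobian f (at x) *v h)) (at x)"
  unfolding C1_map_def by (simp add: jacobian_works)

lemma C1_map_continuous_on: "C1_map f \<Longrightarrow> continuous_on UNIV f"
  unfolding C1_map_def
  by (meson differentiable_imp_continuous_within continuous_at_imp_continuous_on)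

lemma Fmap_has_derivative:
  assumes "C1_map T" "C1_map G"
  shows "((\<lambda>v. Fmap T G v l) has_derivative
           (\<lambda>h. (jacobian T (at x) - l *\<^sub>R jacobian G (at x)) *v h)) (at x)"
proof -
  have "((\<lambda>v. T v - l *\<^sub>R G v) has_derivative
          (\<lambda>h. jacobian T (at x) *v h - l *\<^sub>R (jacobian G (at x) *v h))) (at x)"
    by (intro derivative_intros C1_map_has_derivative assms)
  then show ?thesis
    by (simp add: Fmap_def matrix_vector_mult_diff_rdistrib scaleR_matrix_vector_assoc)
qed

lemma jacobian_Fmap:
  assumes "C1_map T" "C1_map G"
  shows "jacobian (\<lambda>v. Fmap T G v l) (at x) = jacobian T (at x) - l *\<^sub>R jacobian G (at x)"
  unfolding jacobian_def frechet_derivative_at[OF Fmap_has_derivative[OF assms], symmetric] by simp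

lemma Lam_critical_in_u:
  assumes T: "C1_map T" and G: "C1_map G"
    and crit: "((\<lambda>v. Lam T G v p) has_derivative (\<lambda>h. 0)) (at u)" and "G u \<bullet> p \<noteq> 0"
  shows "transpose (jacobian (\<lambda>v. Fmap T G v (Lam T G u p)) (at u)) *v p = 0"
proof -
  have "(jacobian T (at u) *v h) \<bullet> p = Lam T G u p * ((jacobian G (at u) *v h) \<bullet> p)" for h
    using critical_point_of_quotient[OF crit[unfolded Lam_def]
        has_derivative_inner_left[OF C1_map_has_derivative[OF T]]
        has_derivative_inner_left[OF C1_map_has_derivative[OF G]] \<open>G u \<bullet> p \<noteq> 0\<close>]
    by (simp add: Lam_def)
  then show ?thesis
    unfolding transpose_mult_vec_eq_0_iff jacobian_Fmap[OF T G]
    by (simp add: matrix_vector_mult_diff_rdistrib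
        inner_diff_left scaleR_matrix_vector_assoc[symmetric])
qed

lemma pderiv_at_eq:
  assumes "(f has_derivative f') (at x)"
  shows "pderiv_at f x j = f' (axis j 1)"
proof -
  have "((\<lambda>t. x + t *\<^sub>R axis j 1) has_derivative (\<lambda>t. t *\<^sub>R axis j 1)) (at 0)"
    by (auto intro!: derivative_eq_intros)
  from has_derivative_compose[OF this, of f f'] assms
  have "((\<lambda>t. f (x + t *\<^sub>R axis j 1)) has_derivative (\<lambda>t. f' (t *\<^sub>R axis j 1))) (at 0)"
    by simp
  moreover have "(\<lambda>t. f' (t *\<^sub>R axis j 1)) = (*) (f' (axis j 1))"
    using linear_scale[OF has_derivative_linear[OF assms]] by (auto simp: mult.commute)
  ultimately show ?thesis
    unfolding pderiv_at_def by (simp add: has_field_derivative_def DERIV_imp_deriv)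
qed

lemma pderiv_at_Lam_in_psi:
  assumes "G v \<bullet> p \<noteq> 0"
  shows "pderiv_at (\<lambda>q. Lam T G v q) p i = (T v $ i - Lam T G v p * G v $ i) / (G v \<bullet> p)"
proof -
  have "((\<lambda>q. Lam T G v q) has_derivative
          (\<lambda>h. ((T v \<bullet> h) * (G v \<bullet> p) - (T v \<bullet> p) * (G v \<bullet> h)) / ((G v \<bullet> p) * (G v \<bullet> p)))) (at p)"
    unfolding Lam_def using assms
    by (intro has_derivative_divide' has_derivative_inner_right[OF has_derivative_ident])
  from pderiv_at_eq[OF this] show ?thesis
    using assms by (simp add: inner_axis Lam_def field_simps)
qed

text \<open>Here \<open>\<partial>\<Lambda>/\<partial>\<psi>\<^sub>i = (T\<^sub>i - \<Lambda> G\<^sub>i) / \<langle>G, \<psi>\<rangle>\<close>; at the critical point both the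
  numerator and \<open>D\<^sub>u\<Lambda>\<close> vanish, so only the \<open>u\<close>-derivative of \<open>T\<^sub>i - \<lambda> G\<^sub>i\<close> survives.\<close>
lemma D_upsi_Lam_at_critical_point:
  assumes T: "C1_map T" and G: "C1_map G"
    and crit: "((\<lambda>v. Lam T G v p) has_derivative (\<lambda>h. 0)) (at u)" and g: "G u \<bullet> p \<noteq> 0"
    and eigen: "T u = Lam T G u p *\<^sub>R G u"
  shows "D_upsi_Lam T G u p = (1 / (G u \<bullet> p)) *\<^sub>R jacobian (\<lambda>v. Fmap T G v (Lam T G u p)) (at u)"
proof -
  define L where "L = Lam T G u p"
  define M where "M = jacobian T (at u) - L *\<^sub>R jacobian G (at u)"
  define W where "W = {v. G v \<bullet> p \<noteq> 0}"
  have "open W"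
    unfolding W_def using C1_map_continuous_on[OF G]
    by (intro open_Collect_neq continuous_intros) (auto intro: continuous_on_compose2)
  have "u \<in> W" using g by (simp add: W_def)
  have entry: "pderiv_at (\<lambda>v. pderiv_at (\<lambda>q. Lam T G v q) p i) u j = M $ i $ j / (G u \<bullet> p)" for i j
  proof -
    have num: "((\<lambda>v. T v $ i - Lam T G v p * G v $ i) has_derivative (\<lambda>h. (M *v h) $ i)) (at u)"
    proof -
      have "((\<lambda>v. T v $ i - Lam T G v p * G v $ i) has_derivative
              (\<lambda>h. (jacobian T (at u) *v h) $ i - (Lam T G u p * (jacobian G (at u) *v h) $ i + 0 * G u $ i))) (at u)"
        by (intro has_derivative_diff has_derivative_mult crit
            bounded_linear.has_derivative[OF bounded_linear_vec_nth] C1_map_has_derivative T G)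
      then show ?thesis
        by (simp add: M_def L_def matrix_vector_mult_diff_rdistrib scaleR_matrix_vector_assoc[symmetric])
    qed
    have "((\<lambda>v. (T v $ i - Lam T G v p * G v $ i) / (G v \<bullet> p)) has_derivative
            (\<lambda>h. ((M *v h) $ i * (G u \<bullet> p) - (T u $ i - Lam T G u p * G u $ i) * ((jacobian G (at u) *v h) \<bullet> p))
                 / ((G u \<bullet> p) * (G u \<bullet> p)))) (at u)"
      by (intro has_derivative_divide' num has_derivative_inner_left C1_map_has_derivative G g)
    then have "((\<lambda>v. (T v $ i - Lam T G v p * G v $ i) / (G v \<bullet> p)) has_derivative
                 (\<lambda>h. (M *v h) $ i / (G u \<bullet> p))) (at u)"
      by (rule has_derivative_eq_rhs) (use g in \<open>auto simp: eigen fun_eq_iff\<close>)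
    then have "((\<lambda>v. pderiv_at (\<lambda>q. Lam T G v q) p i) has_derivative (\<lambda>h. (M *v h) $ i / (G u \<bullet> p))) (at u)"
      by (rule has_derivative_transform_within_open[OF _ \<open>open W\<close> \<open>u \<in> W\<close>])
        (simp add: W_def pderiv_at_Lam_in_psi)
    from pderiv_at_eq[OF this] show ?thesis
      by (simp add: matrix_vector_mult_basis column_def)
  qed
  show ?thesis
    by (simp add: D_upsi_Lam_def jacobian_Fmap[OF T G] vec_eq_iff entry M_def L_def)
qed

section \<open>A \<open>C\<^sup>1\<close> curve through a regular point\<close>

lemma norm_bounded_below_perturbation:
  fixes A A0 :: "'a::real_normed_vector \<Rightarrow>\<^sub>L 'b::real_normed_vector"
  assumes below: "\<And>z. B * norm z \<le> norm (A0 z)" and close: "norm (A - A0) \<le> B / 2"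
  shows "B / 2 * norm z \<le> norm (A z)"
proof -
  have "norm (A0 z) \<le> norm (A z) + norm ((A0 - A) z)"
    using norm_triangle_ineq[of "A z" "(A0 - A) z"] by (simp add: blinfun.diff_left)
  also have "norm ((A0 - A) z) \<le> B / 2 * norm z"
    using norm_blinfun[of "A0 - A" z] mult_right_mono[OF close norm_ge_zero[of z]]
    by (simp add: norm_minus_commute)
  finally show ?thesis using below[of z] by linarith
qed

lemma continuous_on_solution_of_linear_family:
  fixes A :: "'c::topological_space \<Rightarrow> 'a::real_normed_vector \<Rightarrow>\<^sub>L 'b::real_normed_vector"
  assumes contA: "continuous_on I A" and sol: "\<And>s. s \<in> I \<Longrightarrow> A s (w s) = e"
    and "B > 0" and below: "\<And>s z. s \<in> I \<Longrightarrow> B * norm z \<le> norm (A s z)"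
  shows "continuous_on I w"
  unfolding continuous_on_def
proof
  fix s0 assume "s0 \<in> I"
  have bound: "norm (w s - w s0) \<le> norm (A s0 - A s) * norm (w s0) / B" if "s \<in> I" for s
  proof -
    have "A s (w s - w s0) = (A s0 - A s) (w s0)"
      using sol[OF that] sol[OF \<open>s0 \<in> I\<close>] by (simp add: blinfun.diff_right blinfun.diff_left)
    then have "B * norm (w s - w s0) \<le> norm (A s0 - A s) * norm (w s0)"
      using below[OF that, of "w s - w s0"] norm_blinfun[of "A s0 - A s" "w s0"] by simp
    with \<open>B > 0\<close> show ?thesis by (simp add: field_simps)
  qed
  have "(A \<longlongrightarrow> A s0) (at s0 within I)"
    using contA \<open>s0 \<in> I\<close> by (simp add: continuous_on_def)
  then have "((\<lambda>s. norm (A s0 - A s) * norm (w s0) / B) \<longlongrightarrow> norm (A s0 - A s0) * norm (w s0) / B)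
      (at s0 within I)"
    by (intro tendsto_intros) (use \<open>B > 0\<close> in auto)
  then have lim: "((\<lambda>s. norm (A s0 - A s) * norm (w s0) / B) \<longlongrightarrow> 0) (at s0 within I)"
    by simp
  have "eventually (\<lambda>s. norm (w s - w s0) \<le> norm (A s0 - A s) * norm (w s0) / B) (at s0 within I)"
    unfolding eventually_at_filter by (rule always_eventually) (simp add: bound)
  from Lim_null_comparison[OF this lim] have "((\<lambda>s. w s - w s0) \<longlongrightarrow> 0) (at s0 within I)" .
  then show "(w \<longlongrightarrow> w s0) (at s0 within I)"
    by (rule LIM_zero_cancel)
qed

lemma local_inverse_of_injective_derivative:
  fixes f :: "'a::euclidean_space \<Rightarrow> 'a" and f' :: "'a \<Rightarrow> 'a \<Rightarrow>\<^sub>L 'a"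
  assumes deriv: "\<And>x. (f has_derivative blinfun_apply (f' x)) (at x)"
    and cont: "continuous_on UNIV f'" and inj: "inj (blinfun_apply (f' x0))"
  obtains V g g' where "open V" "f x0 \<in> V" "g (f x0) = x0" "continuous_on V g"
    "\<And>y. y \<in> V \<Longrightarrow> f (g y) = y"
    "\<And>y. y \<in> V \<Longrightarrow> (g has_derivative g' y) (at y) \<and> (\<forall>z. f' (g y) (g' y z) = z)"
proof -
  have lin: "linear (blinfun_apply (f' x0))"
    by (simp add: blinfun.bounded_linear_right bounded_linear.linear)
  obtain h where "linear h" and h: "h \<circ> blinfun_apply (f' x0) = id"
    using linear_injective_left_inverse[OF lin inj] by blast
  then have h_bl: "bounded_linear h" by (simp add: linear_conv_bounded_linear)
  have "Blinfun h o\<^sub>L f' x0 = id_blinfun"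
    by (rule blinfun_eqI) (simp add: bounded_linear_Blinfun_apply[OF h_bl] pointfree_idE[OF h])
  obtain U V g g' where "open U" "U \<subseteq> UNIV" "x0 \<in> U" "open V" "f x0 \<in> V"
    and hom: "homeomorphism U V f g"
    and g': "\<And>y. y \<in> V \<Longrightarrow> (g has_derivative g' y) (at y)"
      "\<And>y. y \<in> V \<Longrightarrow> g' y = inv (blinfun_apply (f' (g y)))"
      "\<And>y. y \<in> V \<Longrightarrow> bij (blinfun_apply (f' (g y)))"
    by (rule inverse_function_theorem[OF open_UNIV deriv cont UNIV_I \<open>_ = id_blinfun\<close>]) (rule that)
  show thesis
  proof
    show "g (f x0) = x0" "continuous_on V g" "\<And>y. y \<in> V \<Longrightarrow> f (g y) = y"
      using hom \<open>x0 \<in> U\<close> unfolding homeomorphism_def by auto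
    show "\<And>y. y \<in> V \<Longrightarrow> (g has_derivative g' y) (at y) \<and> (\<forall>z. f' (g y) (g' y z) = z)"
      using g' by (simp add: bij_is_surj surj_f_inv_f)
  qed fact+
qed

text \<open>The curve is \<open>\<gamma> s = f\<^sup>-\<^sup>1 (f x\<^sub>0 + s e)\<close>. The library's inverse function theorem does not
  say that the local inverse is \<open>C\<^sup>1\<close>; continuity of the velocity \<open>w s\<close> comes from
  \<open>f' (\<gamma> s) (w s) = e\<close> and a lower bound for \<open>f' (\<gamma> s)\<close> that is uniform near \<open>s = 0\<close>.\<close>
lemma C1_curve_through_regular_point:
  fixes f :: "'a::euclidean_space \<Rightarrow> 'a" and f' :: "'a \<Rightarrow> 'a \<Rightarrow>\<^sub>L 'a"
  assumes deriv: "\<And>x. (f has_derivative blinfun_apply (f' x)) (at x)"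
    and cont: "continuous_on UNIV f'" and inj: "inj (blinfun_apply (f' x0))"
    and N: "open N" "x0 \<in> N"
  obtains a \<gamma> w where "0 < a" "\<gamma> C1_differentiable_on {-a<..<a}" "\<gamma> 0 = x0"
    "\<And>s. s \<in> {-a<..<a} \<Longrightarrow> \<gamma> s \<in> N \<and> f (\<gamma> s) = f x0 + s *\<^sub>R e"
    "(\<gamma> has_vector_derivative w) (at 0)" "f' x0 w = e"
proof -
  obtain V g g' where "open V" "f x0 \<in> V" "g (f x0) = x0" "continuous_on V g"
    and fg: "\<And>y. y \<in> V \<Longrightarrow> f (g y) = y"
    and g': "\<And>y. y \<in> V \<Longrightarrow> (g has_derivative g' y) (at y) \<and> (\<forall>z. f' (g y) (g' y z) = z)"
    by (rule local_inverse_of_injective_derivative[OF deriv cont inj]) (rule that)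
  obtain B where "B > 0" and below: "\<And>z. B * norm z \<le> norm (f' x0 z)"
    using linear_inj_bounded_below_pos[OF _ inj]
    by (metis blinfun.bounded_linear_right bounded_linear.linear)
  define c where "c s = f x0 + s *\<^sub>R e" for s :: real
  define \<gamma> where "\<gamma> s = g (c s)" for s
  define w where "w s = g' (c s) e" for s
  have c0: "c 0 = f x0" and \<gamma>0: "\<gamma> 0 = x0"
    by (simp_all add: c_def \<gamma>_def \<open>g (f x0) = x0\<close>)
  have "isCont c 0" unfolding c_def by (intro continuous_intros)
  have "continuous_on UNIV c" unfolding c_def by (intro continuous_intros)
  have "isCont \<gamma> 0"
    unfolding \<gamma>_def using \<open>continuous_on V g\<close> \<open>open V\<close> \<open>f x0 \<in> V\<close> c0
    by (intro isCont_o2[OF \<open>isCont c 0\<close>]) (simp add: continuous_on_eq_continuous_at)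
  have "isCont (\<lambda>s. f' (\<gamma> s)) 0"
    using cont by (intro isCont_o2[OF \<open>isCont \<gamma> 0\<close>]) (simp add: continuous_on_eq_continuous_at)
  have "eventually (\<lambda>s. c s \<in> V \<and> \<gamma> s \<in> N \<and> dist (f' (\<gamma> s)) (f' x0) < B / 2) (at 0)"
    using \<open>isCont c 0\<close> \<open>isCont \<gamma> 0\<close> \<open>isCont (\<lambda>s. f' (\<gamma> s)) 0\<close> \<open>B > 0\<close>
    unfolding isCont_def c0 \<gamma>0
    by (intro eventually_conj topological_tendstoD[OF _ \<open>open V\<close> \<open>f x0 \<in> V\<close>]
        topological_tendstoD[OF _ N] tendstoD) simp_all
  then have "eventually (\<lambda>s. c s \<in> V \<and> \<gamma> s \<in> N \<and> dist (f' (\<gamma> s)) (f' x0) < B / 2) (nhds 0)"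
    using \<open>f x0 \<in> V\<close> N \<open>B > 0\<close> by (simp add: eventually_nhds_conv_at c0 \<gamma>0)
  then obtain a where "a > 0"
    and near: "\<And>s. dist s 0 < a \<Longrightarrow> c s \<in> V \<and> \<gamma> s \<in> N \<and> dist (f' (\<gamma> s)) (f' x0) < B / 2"
    unfolding eventually_nhds_metric by blast
  define I where "I = {-a<..<a}"
  have near_I: "c s \<in> V" "\<gamma> s \<in> N" "norm (f' (\<gamma> s) - f' x0) \<le> B / 2" if "s \<in> I" for s
    using near[of s] that by (auto simp: I_def dist_norm abs_less_iff)
  have velocity: "(\<gamma> has_vector_derivative w s) (at s)" "f' (\<gamma> s) (w s) = e" if "s \<in> I" for s
  proof -
    have dg: "(g has_derivative g' (c s)) (at (c s))" using g' near_I(1)[OF that] by blast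
    have "(c has_derivative (\<lambda>t. t *\<^sub>R e)) (at s)"
      unfolding c_def by (auto intro!: derivative_eq_intros)
    from has_derivative_compose[OF this dg]
    have "((\<lambda>t. g (c t)) has_derivative (\<lambda>t. g' (c s) (t *\<^sub>R e))) (at s)" .
    moreover have "(\<lambda>t. g' (c s) (t *\<^sub>R e)) = (\<lambda>t. t *\<^sub>R w s)"
      using linear_scale[OF has_derivative_linear[OF dg]] by (simp add: w_def)
    ultimately show "(\<gamma> has_vector_derivative w s) (at s)"
      by (simp add: has_vector_derivative_def \<gamma>_def[abs_def])
    show "f' (\<gamma> s) (w s) = e"
      using g'[OF near_I(1)[OF that]] unfolding \<gamma>_def w_def by blast
  qed
  have "continuous_on I c"
    using continuous_on_subset[OF \<open>continuous_on UNIV c\<close>] by simp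
  then have "continuous_on I \<gamma>"
    unfolding \<gamma>_def[abs_def]
    by (rule continuous_on_compose2[OF \<open>continuous_on V g\<close>]) (use near_I(1) in blast)
  then have "continuous_on I (\<lambda>s. f' (\<gamma> s))"
    by (rule continuous_on_compose2[OF cont]) simp
  then have "continuous_on I w"
    by (rule continuous_on_solution_of_linear_family[OF _ velocity(2), where B = "B / 2"])
      (use \<open>B > 0\<close> norm_bounded_below_perturbation[OF below near_I(3)] in simp_all)
  show thesis
  proof
    show "\<gamma> C1_differentiable_on {-a<..<a}"
      unfolding C1_differentiable_on_def I_def[symmetric] using velocity(1) \<open>continuous_on I w\<close> by blast
    show "(\<gamma> has_vector_derivative w 0) (at 0)" "f' x0 (w 0) = e"
      using velocity[of 0] \<open>a > 0\<close> by (simp_all add: I_def \<gamma>0)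
    show "\<gamma> s \<in> N \<and> f (\<gamma> s) = f x0 + s *\<^sub>R e" if "s \<in> {-a<..<a}" for s
    proof -
      have "s \<in> I" using that by (simp add: I_def)
      then show ?thesis
        using near_I(2) fg[OF near_I(1)] by (simp add: \<gamma>_def c_def)
    qed
  qed fact+
qed


section \<open>Turning points\<close>

lemma bordering_coefficient_eq_0:
  fixes M :: "real^'n^'n"
  assumes "transpose M *v p = 0" "g \<bullet> p \<noteq> 0" "M *v h - k *\<^sub>R g = 0"
  shows "k = 0"
proof -
  have "(M *v h) \<bullet> p = 0"
    using assms(1) unfolding transpose_mult_vec_eq_0_iff by blast
  then have "k * (g \<bullet> p) = 0"
    using arg_cong[OF assms(3), of "\<lambda>v. v \<bullet> p"] by (simp add: inner_diff_left)
  with assms(2) show ?thesis by simp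
qed

lemma bordered_map_injective:
  fixes M :: "real^'n^'n"
  assumes "transpose M *v p = 0" "g \<bullet> p \<noteq> 0" "{x. M *v x = 0} = span {q}" "q \<noteq> 0"
  shows "inj (\<lambda>z :: (real^'n) \<times> real. (M *v fst z - snd z *\<^sub>R g, q \<bullet> fst z))"
proof (rule injI)
  fix a b :: "(real^'n) \<times> real"
  assume "(M *v fst a - snd a *\<^sub>R g, q \<bullet> fst a) = (M *v fst b - snd b *\<^sub>R g, q \<bullet> fst b)"
  then have eq: "M *v fst a - snd a *\<^sub>R g = M *v fst b - snd b *\<^sub>R g" and q: "q \<bullet> (fst a - fst b) = 0"
    by (simp_all add: inner_diff_right)
  have "M *v (fst a - fst b) - (snd a - snd b) *\<^sub>R g = (M *v fst a - snd a *\<^sub>R g) - (M *v fst b - snd b *\<^sub>R g)"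
    by (simp add: algebra_simps)
  with eq have M: "M *v (fst a - fst b) - (snd a - snd b) *\<^sub>R g = 0" by simp
  have "snd a = snd b"
    using bordering_coefficient_eq_0[OF assms(1,2) M] by simp
  with M have "fst a - fst b \<in> span {q}"
    using assms(3) by auto
  then obtain c where "fst a - fst b = c *\<^sub>R q"
    by (auto simp: span_singleton)
  with q \<open>q \<noteq> 0\<close> have "fst a = fst b" by simp
  with \<open>snd a = snd b\<close> show "a = b" by (simp add: prod_eq_iff)
qed

lemma bordered_Fmap_has_derivative:
  fixes T G :: "real^'n \<Rightarrow> real^'n" and q :: "real^'n"
  assumes T: "C1_map T" and G: "C1_map G"
  shows "((\<lambda>x. (Fmap T G (fst x) (snd x), q \<bullet> fst x)) has_derivative
          (\<lambda>y. ((jacobian T (at (fst x)) - snd x *\<^sub>R jacobian G (at (fst x))) *v fst y - snd y *\<^sub>R G (fst x),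
                q \<bullet> fst y))) (at x)"
proof -
  have fst_comp: "((\<lambda>x. f (fst x)) has_derivative (\<lambda>y. jacobian f (at (fst x)) *v fst y)) (at x)"
    if "C1_map f" for f :: "real^'n \<Rightarrow> real^'n"
    using has_derivative_compose[where x = x and s = UNIV, OF has_derivative_fst[OF has_derivative_ident]
        C1_map_has_derivative[OF that]] by (simp add: o_def)
  show ?thesis
    unfolding Fmap_def
    by (rule derivative_eq_intros fst_comp[OF T] fst_comp[OF G] | simp)+
      (auto simp: algebra_simps scaleR_matrix_vector_assoc)
qed

lemma continuous_on_matrix_vector_mult:
  fixes F :: "'a::topological_space \<Rightarrow> real^'n^'m"
  shows "continuous_on S F \<Longrightarrow> continuous_on S (\<lambda>x. F x *v c)"
  unfolding matrix_vector_mult_def by (intro continuous_intros continuous_on_component)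

lemma continuous_on_bordered_Fmap_derivative:
  fixes T G :: "real^'n \<Rightarrow> real^'n" and q :: "real^'n"
  assumes T: "C1_map T" and G: "C1_map G"
  shows "continuous_on UNIV (\<lambda>x. Blinfun (\<lambda>y.
           ((jacobian T (at (fst x)) - snd x *\<^sub>R jacobian G (at (fst x))) *v fst y - snd y *\<^sub>R G (fst x),
            q \<bullet> fst y)))"
proof (rule continuous_on_blinfun_componentwise)
  fix b :: "(real^'n) \<times> real"
  have "continuous_on UNIV (\<lambda>x. jacobian T (at x))" "continuous_on UNIV (\<lambda>x. jacobian G (at x))"
    using T G unfolding C1_map_def by simp_all
  then have "continuous_on UNIV (\<lambda>x::(real^'n) \<times> real.
      (jacobian T (at (fst x)) - snd x *\<^sub>R jacobian G (at (fst x))) *v fst b)"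
    by (intro continuous_on_matrix_vector_mult continuous_on_diff continuous_on_scaleR continuous_on_snd
        continuous_on_compose2[of UNIV "\<lambda>x. jacobian T (at x)" UNIV fst]
        continuous_on_compose2[of UNIV "\<lambda>x. jacobian G (at x)" UNIV fst] continuous_on_fst continuous_on_id)
      simp_all
  moreover have "continuous_on UNIV (\<lambda>x::(real^'n) \<times> real. G (fst x))"
    by (rule continuous_on_compose2[OF C1_map_continuous_on[OF G] continuous_on_fst[OF continuous_on_id]]) simp
  ultimately show "continuous_on UNIV (\<lambda>x. blinfun_apply (Blinfun (\<lambda>y.
           ((jacobian T (at (fst x)) - snd x *\<^sub>R jacobian G (at (fst x))) *v fst y - snd y *\<^sub>R G (fst x),
            q \<bullet> fst y))) b)"
    unfolding bounded_linear_Blinfun_apply[OF has_derivative_bounded_linear[OF bordered_Fmap_has_derivative[OF T G]]]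
    by (intro continuous_on_Pair continuous_on_diff continuous_on_scaleR continuous_on_const)
qed

lemma turning_pointI:
  assumes "0 < a" and C1: "\<gamma> C1_differentiable_on {-a<..<a}" and "\<gamma> 0 = (u, L)"
    and on_curve: "\<And>s. s \<in> {-a<..<a} \<Longrightarrow> Fmap T G (fst (\<gamma> s)) (snd (\<gamma> s)) = 0 \<and> snd (\<gamma> s) \<le> L"
    and "(\<gamma> has_vector_derivative w) (at 0)" and "snd w = 0"
  shows "turning_point T G u L"
proof -
  have "((\<lambda>s. snd (\<gamma> s)) has_derivative (\<lambda>t. snd (t *\<^sub>R w))) (at 0)"
    using \<open>(\<gamma> has_vector_derivative w) (at 0)\<close>
    unfolding has_vector_derivative_def by (rule has_derivative_snd)
  moreover have "(\<lambda>t. snd (t *\<^sub>R w)) = (*) 0"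
    using \<open>snd w = 0\<close> by auto
  ultimately have "((\<lambda>s. snd (\<gamma> s)) has_real_derivative 0) (at 0)"
    unfolding has_field_derivative_def by simp
  show ?thesis
    unfolding turning_point_def
  proof (intro exI[of _ a] conjI exI[of _ "\<lambda>s. fst (\<gamma> s)"] exI[of _ "\<lambda>s. snd (\<gamma> s)"])
    show "(\<lambda>s. (fst (\<gamma> s), snd (\<gamma> s))) C1_differentiable_on {-a<..<a}"
      using C1 by simp
    show "fst (\<gamma> 0) = u" "snd (\<gamma> 0) = L"
      using \<open>\<gamma> 0 = (u, L)\<close> by simp_all
  qed (use \<open>0 < a\<close> on_curve \<open>(_ has_real_derivative 0) _\<close> in blast)+
qed

text \<open>The solution curve is parametrised by \<open>\<langle>q, u\<rangle>\<close>, where \<open>Ker D\<^sub>uF = span {q}\<close>;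
  \<open>\<lambda>'(0) = 0\<close> because \<open>p \<in> Ker D\<^sub>uF\<^sup>T\<close> is not orthogonal to \<open>G u = -D\<^sub>\<lambda>F\<close>.\<close>
lemma turning_point_at_simple_fold:
  fixes T G :: "real^'n \<Rightarrow> real^'n"
  assumes T: "C1_map T" and G: "C1_map G" and "open S" "u \<in> S"
    and zero: "Fmap T G u L = 0"
    and fold: "dim {x. jacobian (\<lambda>v. Fmap T G v L) (at u) *v x = 0} = 1"
    and left: "transpose (jacobian (\<lambda>v. Fmap T G v L) (at u)) *v p = 0" "G u \<bullet> p \<noteq> 0"
    and bound: "\<And>v l. v \<in> S \<Longrightarrow> Fmap T G v l = 0 \<Longrightarrow> l \<le> L"
  shows "turning_point T G u L"
proof -
  define M where "M = jacobian (\<lambda>v. Fmap T G v L) (at u)"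
  have "\<not> {x. M *v x = 0} \<subseteq> {0}"
    using fold dim_eq_0[of "{x. M *v x = 0}"] by (simp add: M_def)
  then obtain q where "M *v q = 0" "q \<noteq> 0" by blast
  then have ker: "{x. M *v x = 0} = span {q}"
    using fold by (intro subspace_eq_span_of_dim_1 subspace_null_space) (simp_all add: M_def)
  define \<Phi> where "\<Phi> x = (Fmap T G (fst x) (snd x), q \<bullet> fst x)" for x :: "(real^'n) \<times> real"
  define \<Phi>' where "\<Phi>' x = (\<lambda>y. ((jacobian T (at (fst x)) - snd x *\<^sub>R jacobian G (at (fst x))) *v fst y
      - snd y *\<^sub>R G (fst x), q \<bullet> fst y))" for x :: "(real^'n) \<times> real"
  have deriv: "(\<Phi> has_derivative \<Phi>' x) (at x)" for x
    unfolding \<Phi>_def[abs_def] \<Phi>'_def by (rule bordered_Fmap_has_derivative[OF T G])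
  have blinfun: "blinfun_apply (Blinfun (\<Phi>' x)) = \<Phi>' x" for x
    using bounded_linear_Blinfun_apply[OF has_derivative_bounded_linear[OF deriv]] .
  have \<Phi>'_fold: "\<Phi>' (u, L) = (\<lambda>y. (M *v fst y - snd y *\<^sub>R G u, q \<bullet> fst y))"
    by (simp add: \<Phi>'_def M_def jacobian_Fmap[OF T G])
  have inj: "inj (\<Phi>' (u, L))"
    unfolding \<Phi>'_fold using bordered_map_injective[OF left(1)[folded M_def] left(2) ker \<open>q \<noteq> 0\<close>] .
  have cont: "continuous_on UNIV (\<lambda>x. Blinfun (\<Phi>' x))"
    unfolding \<Phi>'_def by (rule continuous_on_bordered_Fmap_derivative[OF T G])
  have "open (S \<times> UNIV)" "(u, L) \<in> S \<times> UNIV"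
    using \<open>open S\<close> \<open>u \<in> S\<close> by (simp_all add: open_Times)
  obtain a \<gamma> w where "0 < a" and C1: "\<gamma> C1_differentiable_on {-a<..<a}" and "\<gamma> 0 = (u, L)"
    and curve: "\<And>s. s \<in> {-a<..<a} \<Longrightarrow> \<gamma> s \<in> S \<times> UNIV \<and> \<Phi> (\<gamma> s) = \<Phi> (u, L) + s *\<^sub>R (0, 1)"
    and "(\<gamma> has_vector_derivative w) (at 0)" and "\<Phi>' (u, L) w = (0, 1)"
    by (rule C1_curve_through_regular_point[of \<Phi> "\<lambda>x. Blinfun (\<Phi>' x)", unfolded blinfun,
          OF deriv cont inj \<open>open (S \<times> UNIV)\<close> \<open>(u, L) \<in> S \<times> UNIV\<close>]) (rule that)
  have "M *v fst w - snd w *\<^sub>R G u = 0"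
    using \<open>\<Phi>' (u, L) w = (0, 1)\<close> by (simp add: \<Phi>'_fold)
  then have "snd w = 0"
    by (rule bordering_coefficient_eq_0[OF left(1)[folded M_def] left(2)])
  show ?thesis
  proof (rule turning_pointI[OF \<open>0 < a\<close> C1 \<open>\<gamma> 0 = (u, L)\<close> _ \<open>(\<gamma> has_vector_derivative w) (at 0)\<close> \<open>snd w = 0\<close>])
    fix s assume "s \<in> {-a<..<a}"
    then have "fst (\<gamma> s) \<in> S" and "Fmap T G (fst (\<gamma> s)) (snd (\<gamma> s)) = 0"
      using curve zero by (auto simp: \<Phi>_def mem_Times_iff)
    then show "Fmap T G (fst (\<gamma> s)) (snd (\<gamma> s)) = 0 \<and> snd (\<gamma> s) \<le> L"
      using bound by blast
  qed
qed

lemma le_lambda_star_if_Fmap_zero: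
  assumes pos: "\<forall>v\<in>S. \<forall>p\<in>Sigma_cone. G v \<bullet> p > 0" and "v \<in> S" and "Fmap T G v l = 0"
  shows "ereal l \<le> lambda_star T G S"
proof -
  have "Lam T G v p = l" if "p \<in> Sigma_cone" for p
  proof -
    have "G v \<bullet> p \<noteq> 0" using pos \<open>v \<in> S\<close> that by fastforce
    then show ?thesis using \<open>Fmap T G v l = 0\<close> by (simp add: Lam_def Fmap_def)
  qed
  moreover have "(1 :: real^'n) \<in> Sigma_cone"
    by (simp add: Sigma_cone_def vec_eq_iff)
  ultimately have "(INF p\<in>Sigma_cone. ereal (Lam T G v p)) = ereal l"
    by (subst INF_cong[OF refl, of _ _ "\<lambda>_. ereal l"]) (auto intro: INF_const)
  then show ?thesis
    unfolding lambda_star_def using SUP_upper[OF \<open>v \<in> S\<close>] by metis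
qed

lemma turning_point_Fmap_zero: "turning_point T G u l \<Longrightarrow> Fmap T G u l = 0"
  unfolding turning_point_def by (force dest: bspec[where x = 0])

lemma simple_solution_is_simple_fold:
  assumes T: "C1_map T" and G: "C1_map G" and "simple_solution T G S u p" and g: "G u \<bullet> p \<noteq> 0"
  defines "J \<equiv> jacobian (\<lambda>v. Fmap T G v (Lam T G u p)) (at u)"
  shows "Fmap T G u (Lam T G u p) = 0" and "transpose J *v p = 0" and "dim {x. J *v x = 0} = 1"
proof -
  have crit_p: "((\<lambda>q. Lam T G u q) has_derivative (\<lambda>h. 0)) (at p)"
    and crit_u: "((\<lambda>v. Lam T G v p) has_derivative (\<lambda>h. 0)) (at u)"
    and simple: "dim {x. D_upsi_Lam T G u p *v x = 0} = 1"
    using \<open>simple_solution T G S u p\<close>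
    unfolding simple_solution_def maximin_solution_def stationary_point_def by auto
  have eigen: "T u = Lam T G u p *\<^sub>R G u"
    using inner_quotient_critical_point[OF crit_p[unfolded Lam_def] g] by (simp add: Lam_def)
  then show "Fmap T G u (Lam T G u p) = 0"
    by (simp add: Fmap_def)
  show "transpose J *v p = 0"
    unfolding J_def by (rule Lam_critical_in_u[OF T G crit_u g])
  show "dim {x. J *v x = 0} = 1"
    using simple g D_upsi_Lam_at_critical_point[OF T G crit_u g eigen]
    by (simp add: J_def scaleR_matrix_vector_assoc[symmetric])
qed

theorem theorem1:
  fixes T G :: "real^'n \<Rightarrow> real^'n" and S :: "(real^'n) set" and u psi :: "real^'n"
  assumes "C1_map T" and "C1_map G"
    and "open S"
    and "\<forall>v\<in>S. \<forall>p\<in>Sigma_cone. G v \<bullet> p > 0"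
    and "lambda_star T G S < \<infinity>"
    and "simple_solution T G S u psi"
  shows "maximal_turning_point T G S u (real_of_ereal (lambda_star T G S)) \<and>
         {p. transpose (jacobian (\<lambda>v. Fmap T G v (real_of_ereal (lambda_star T G S))) (at u)) *v p = 0}
           = span {psi}"
proof -
  note T = assms(1) and G = assms(2) and pos = assms(4)
  have "u \<in> S" "psi \<in> Sigma_cone" and lam_star: "ereal (Lam T G u psi) = lambda_star T G S"
    using assms(6) unfolding simple_solution_def maximin_solution_def stationary_point_def by auto
  define L where "L = Lam T G u psi"
  have L: "real_of_ereal (lambda_star T G S) = L"
    using lam_star by (metis L_def real_of_ereal.simps(1))
  have "G u \<bullet> psi \<noteq> 0" "psi \<noteq> 0"
    using pos \<open>u \<in> S\<close> \<open>psi \<in> Sigma_cone\<close> by (fastforce simp: Sigma_cone_def)+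
  note fold = simple_solution_is_simple_fold[OF T G assms(6) \<open>G u \<bullet> psi \<noteq> 0\<close>, folded L_def]
  have bound: "l \<le> L" if "v \<in> S" "Fmap T G v l = 0" for v l
    using le_lambda_star_if_Fmap_zero[OF pos that] unfolding lam_star[symmetric] L_def by simp
  have "turning_point T G u L"
    by (rule turning_point_at_simple_fold[OF T G \<open>open S\<close> \<open>u \<in> S\<close> fold(1,3,2) \<open>G u \<bullet> psi \<noteq> 0\<close> bound])
  then show ?thesis
    using \<open>u \<in> S\<close> bound null_space_transpose_eq_span[OF fold(3,2) \<open>psi \<noteq> 0\<close>]
    by (auto simp: maximal_turning_point_def L dest: turning_point_Fmap_zero)
qed

end
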